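(* The genus of a based matrix over a domain $R$ is a homology invariant: homologous based matrices over $R$ have equal genus.
   Context: $R$ is a commutative ring with unit and no zero-divisors. A based matrix over $R$ is a triple $(G,s,b)$, $G$ a finite set, $s\in G$, $b:G\times G\to R$ with $b(g,h)=-b(h,g)$, $b(g,g)=0$. For $X,Y\subset G$, $b(X,Y)=\sum_{g\in X,h\in Y}b(g,h)$. A filling of $T=(G,s,b)$ is a finite family $\{X_i\}$ of pairwise disjoint (possibly empty) subsets of $G$ with $\bigcup X_i=G$, $\#X_i\le2$ for all $i$, and one $X_i$ equal to $\{s\}$; its matrix is $(b(X_i,X_j))_{i,j}$, and $\sigma(\{X_i\})$ is half the rank (maximal size of a nonzero minor) of this matrix. The genus is $\sigma(T)=\min\sigma(\mathcal{X})$ over all fillings $\mathcal{X}$. Elementary extensions: $M_1$ adds a new element $g$ with $b(g,h)=0$ for all $h$; $M_2$ adds $g$ with $b(g,h)=b(s,h)$ for all $h$; $M_3$ adds $g_1,g_2$ with a skew-symmetric zero-diagonal extension such that $b(g_1,h)+b(g_2,h)=b(s,h)$ for all $h$. Isomorphism: bijection sending $s$ to $s'$ and $b$ to $b'$. Homologous: related by elementary extensions, their inverses and isomorphisms. *)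

theory Defs
  imports Main "Jordan_Normal_Form.Determinant" "Jordan_Normal_Form.DL_Submatrix"
begin

text \<open>Only the values of b on G x G are relevant.\<close>

type_synonym ('a, 'r) based_matrix = "'a set \<times> 'a \<times> ('a \<Rightarrow> 'a \<Rightarrow> 'r)"

definition based_matrix :: "('a, 'r::idom) based_matrix \<Rightarrow> bool" where
  "based_matrix T \<longleftrightarrow> (case T of (G, s, b) \<Rightarrow>
     finite G \<and> s \<in> G \<and> (\<forall>g\<in>G. \<forall>h\<in>G. b g h = - b h g) \<and> (\<forall>g\<in>G. b g g = 0))"

definition bsum :: "('a \<Rightarrow> 'a \<Rightarrow> 'r::idom) \<Rightarrow> 'a set \<Rightarrow> 'a set \<Rightarrow> 'r" where
  "bsum b X Y = (\<Sum>g\<in>X. \<Sum>h\<in>Y. b g h)"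

definition minor_rank :: "'r::idom mat \<Rightarrow> nat" where
  "minor_rank A = Max {k. \<exists>I J. I \<subseteq> {..<dim_row A} \<and> J \<subseteq> {..<dim_col A} \<and>
       card I = k \<and> card J = k \<and> det (submatrix A I J) \<noteq> 0}"

definition is_filling :: "('a, 'r::idom) based_matrix \<Rightarrow> 'a set list \<Rightarrow> bool" where
  "is_filling T Xs \<longleftrightarrow> (case T of (G, s, b) \<Rightarrow>
     (\<forall>i<length Xs. \<forall>j<length Xs. i \<noteq> j \<longrightarrow> Xs ! i \<inter> Xs ! j = {}) \<and>
     (\<Union>(set Xs)) = G \<and>
     (\<forall>X\<in>set Xs. finite X \<and> card X \<le> 2) \<and>
     {s} \<in> set Xs)"

definition filling_matrix :: "('a, 'r::idom) based_matrix \<Rightarrow> 'a set list \<Rightarrow> 'r mat" where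
  "filling_matrix T Xs = (case T of (G, s, b) \<Rightarrow>
     mat (length Xs) (length Xs) (\<lambda>(i, j). bsum b (Xs ! i) (Xs ! j)))"

definition filling_sigma :: "('a, 'r::idom) based_matrix \<Rightarrow> 'a set list \<Rightarrow> real" where
  "filling_sigma T Xs = real (minor_rank (filling_matrix T Xs)) / 2"

definition genus :: "('a, 'r::idom) based_matrix \<Rightarrow> real" where
  "genus T = Inf {filling_sigma T Xs | Xs. is_filling T Xs}"

definition ext_M1 :: "('a, 'r::idom) based_matrix \<Rightarrow> ('a, 'r) based_matrix \<Rightarrow> bool" where
  "ext_M1 T T' \<longleftrightarrow> (case T of (G, s, b) \<Rightarrow> case T' of (G', s', b') \<Rightarrow>
     based_matrix T \<and> based_matrix T' \<and> s' = s \<and>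
     (\<exists>g. g \<notin> G \<and> G' = insert g G \<and>
        (\<forall>x\<in>G. \<forall>y\<in>G. b' x y = b x y) \<and> (\<forall>h\<in>G'. b' g h = 0)))"

definition ext_M2 :: "('a, 'r::idom) based_matrix \<Rightarrow> ('a, 'r) based_matrix \<Rightarrow> bool" where
  "ext_M2 T T' \<longleftrightarrow> (case T of (G, s, b) \<Rightarrow> case T' of (G', s', b') \<Rightarrow>
     based_matrix T \<and> based_matrix T' \<and> s' = s \<and>
     (\<exists>g. g \<notin> G \<and> G' = insert g G \<and>
        (\<forall>x\<in>G. \<forall>y\<in>G. b' x y = b x y) \<and> (\<forall>h\<in>G. b' g h = b s h)))"

definition ext_M3 :: "('a, 'r::idom) based_matrix \<Rightarrow> ('a, 'r) based_matrix \<Rightarrow> bool" where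
  "ext_M3 T T' \<longleftrightarrow> (case T of (G, s, b) \<Rightarrow> case T' of (G', s', b') \<Rightarrow>
     based_matrix T \<and> based_matrix T' \<and> s' = s \<and>
     (\<exists>g1 g2. g1 \<notin> G \<and> g2 \<notin> G \<and> g1 \<noteq> g2 \<and> G' = insert g1 (insert g2 G) \<and>
        (\<forall>x\<in>G. \<forall>y\<in>G. b' x y = b x y) \<and> (\<forall>h\<in>G. b' g1 h + b' g2 h = b s h)))"

definition elem_ext :: "('a, 'r::idom) based_matrix \<Rightarrow> ('a, 'r) based_matrix \<Rightarrow> bool" where
  "elem_ext T T' \<longleftrightarrow> ext_M1 T T' \<or> ext_M2 T T' \<or> ext_M3 T T'"

definition bm_iso :: "('a, 'r::idom) based_matrix \<Rightarrow> ('a, 'r) based_matrix \<Rightarrow> bool" where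
  "bm_iso T T' \<longleftrightarrow> (case T of (G, s, b) \<Rightarrow> case T' of (G', s', b') \<Rightarrow>
     based_matrix T \<and> based_matrix T' \<and>
     (\<exists>f. bij_betw f G G' \<and> f s = s' \<and> (\<forall>x\<in>G. \<forall>y\<in>G. b' (f x) (f y) = b x y)))"

inductive homologous :: "('a, 'r::idom) based_matrix \<Rightarrow> ('a, 'r) based_matrix \<Rightarrow> bool" where
  iso: "bm_iso T T' \<Longrightarrow> homologous T T'"
| ext: "elem_ext T T' \<Longrightarrow> homologous T T'"
| ext_inv: "elem_ext T' T \<Longrightarrow> homologous T T'"
| trans: "homologous T1 T2 \<Longrightarrow> homologous T2 T3 \<Longrightarrow> homologous T1 T3"

end

theory Submission
  imports Defs "HOL-Library.Indicator_Function"
begin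

text \<open>An isomorphism carries fillings to fillings with the same matrix. An elementary extension
  adds g1, g2 to G such that the new rows add up to d times the row of s. A filling of G gives
  one of G' by adding the block {g1, g2}; a filling of G' gives one of G by merging the blocks
  of g1 and g2 and deleting g1, g2. In both directions the indicator vector of every block of the
  new filling is a linear combination of the old indicators plus a multiple of
  ind {g1, g2} - d ind {s}, which is isotropic and orthogonal to every vector supported in G.
  Hence the new filling matrix has the form P A P^T with A the old one. By Cauchy--Binet every
  minor of P A P^T lies in the ideal generated by the minors of A of the same size, so the
  rank cannot go up, and the genera of the two based matrices bound each other.\<close>

section \<open>Minors of matrix products\<close>

lemma pick_eq_iff_card_less:
  assumes "finite S" and "x \<in> S" and "j < card S"
  shows "pick S j = x \<longleftrightarrow> j = card {a\<in>S. a < x}"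
proof
  let ?j = "card {a\<in>S. a < x}"
  have pick_j: "pick S ?j = x" by (rule pick_card_in_set[OF \<open>x \<in> S\<close>])
  have "?j < card S" by (rule psubset_card_mono) (use assms in auto)
  then show "pick S j = x \<Longrightarrow> j = ?j"
    using pick_mono[of ?j S j] pick_mono[of j S ?j] \<open>j < card S\<close> pick_j
    by (metis nat_neq_iff order_less_irrefl)
qed (use pick_card_in_set[OF \<open>x \<in> S\<close>] in simp)

lemma submatrix_index_dim:
  assumes "I \<subseteq> {..<dim_row A}" and "J \<subseteq> {..<dim_col A}" and "i < card I" and "j < card J"
  shows "submatrix A I J $$ (i, j) = A $$ (pick I i, pick J j)"
proof -
  have "{i. i < dim_row A \<and> i \<in> I} = I" "{j. j < dim_col A \<and> j \<in> J} = J"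
    using assms(1,2) by auto
  with assms(3,4) show ?thesis by (simp add: submatrix_index)
qed

lemma dim_submatrix_subset:
  assumes "I \<subseteq> {..<dim_row A}" and "J \<subseteq> {..<dim_col A}"
  shows "dim_row (submatrix A I J) = card I" "dim_col (submatrix A I J) = card J"
proof -
  have "{i. i < dim_row A \<and> i \<in> I} = I" "{j. j < dim_col A \<and> j \<in> J} = J"
    using assms by auto
  then show "dim_row (submatrix A I J) = card I" "dim_col (submatrix A I J) = card J"
    by (simp_all add: dim_submatrix)
qed

lemma mat_of_rows_eq_mult_submatrix:
  fixes B :: "'a::semiring_1 mat"
  assumes B: "B \<in> carrier_mat n m" and f: "\<forall>i<k. f i < n"
  defines "S \<equiv> f ` {0..<k}"
  shows "mat\<^sub>r k m (\<lambda>i. row B (f i))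
    = mat k (card S) (\<lambda>(i, j). of_bool (pick S j = f i)) * submatrix B S UNIV"
    (is "_ = ?C * ?Sub")
proof (rule eq_matI)
  have S: "S \<subseteq> {..<n}" "finite S" unfolding S_def using f by auto
  have dims: "dim_row B = n" "dim_col B = m" using B by auto
  have rows_S: "{i. i < n \<and> i \<in> S} = S" using S by auto
  then have Sub: "?Sub \<in> carrier_mat (card S) m"
    unfolding carrier_mat_def by (simp add: dim_submatrix dims)
  have Sub_index: "?Sub $$ (j, j') = B $$ (pick S j, j')" if "j < card S" "j' < m" for j j'
    using that by (subst submatrix_index) (simp_all add: rows_S dims pick_UNIV)
  fix i j' assume "i < dim_row (?C * ?Sub)" and "j' < dim_col (?C * ?Sub)"
  then have i: "i < k" and j': "j' < m" using Sub by auto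
  let ?j = "card {a\<in>S. a < f i}"
  have fi: "f i \<in> S" unfolding S_def using i by auto
  have "?j < card S" using psubset_card_mono[OF S(2), of "{a\<in>S. a < f i}"] fi by auto
  have "(?C * ?Sub) $$ (i, j') = (\<Sum>j<card S. ?C $$ (i, j) * ?Sub $$ (j, j'))"
    using Sub i j' by (simp add: scalar_prod_def lessThan_atLeast0)
  also have "\<dots> = (\<Sum>j<card S. if j = ?j then B $$ (f i, j') else 0)"
  proof (rule sum.cong[OF refl])
    fix j assume j: "j \<in> {..<card S}"
    then have "pick S j = f i \<longleftrightarrow> j = ?j"
      using pick_eq_iff_card_less[OF S(2) fi, of j] by auto
    then show "?C $$ (i, j) * ?Sub $$ (j, j') = (if j = ?j then B $$ (f i, j') else 0)"
      using j i j' Sub_index[of j j'] by auto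
  qed
  also have "\<dots> = B $$ (f i, j')" using \<open>?j < card S\<close> by simp
  finally show "mat\<^sub>r k m (\<lambda>i. row B (f i)) $$ (i, j') = (?C * ?Sub) $$ (i, j')"
    using i j' f B by auto
qed (use B in \<open>auto simp: dim_submatrix\<close>)

lemma det_mat_of_rows_eq_0:
  fixes B :: "'a::idom mat"
  assumes B: "B \<in> carrier_mat n k"
    and f: "\<forall>i<k. f i < n"
    and minors: "\<And>I. I \<subseteq> {..<n} \<Longrightarrow> card I = k \<Longrightarrow> det (submatrix B I UNIV) = 0"
  shows "det (mat\<^sub>r k k (\<lambda>i. row B (f i))) = 0"
proof (cases "inj_on f {0..<k}")
  case False
  then obtain i j where ij: "f i = f j" "i \<noteq> j" "i < k" "j < k"
    unfolding inj_on_def by auto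
  have "row (mat\<^sub>r k k (\<lambda>i. row B (f i))) i = row (mat\<^sub>r k k (\<lambda>i. row B (f i))) j"
    using ij B by (simp add: row_mat_of_row_fun)
  from det_identical_rows[OF _ ij(2-4) this] show ?thesis by simp
next
  case True
  define S where "S = f ` {0..<k}"
  have S: "S \<subseteq> {..<n}" "card S = k"
    unfolding S_def using f card_image[OF True] by auto
  define C where "C = mat k (card S) (\<lambda>(i, j). of_bool (pick S j = f i) :: 'a)"
  have C: "C \<in> carrier_mat k k" unfolding C_def using S(2) by simp
  have "{i. i < n \<and> i \<in> S} = S" "dim_row B = n" "dim_col B = k" using S(1) B by auto
  then have Sub: "submatrix B S UNIV \<in> carrier_mat k k"
    unfolding carrier_mat_def by (simp add: dim_submatrix S(2))
  have "mat\<^sub>r k k (\<lambda>i. row B (f i)) = C * submatrix B S UNIV"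
    unfolding C_def S_def by (rule mat_of_rows_eq_mult_submatrix[OF B f])
  then show ?thesis using det_mult[OF C Sub] minors[OF S] by simp
qed

lemma det_mult_eq_0_if_row_minors_eq_0:
  fixes A B :: "'a::idom mat"
  assumes A: "A \<in> carrier_mat k n" and B: "B \<in> carrier_mat n k"
    and minors: "\<And>I. I \<subseteq> {..<n} \<Longrightarrow> card I = k \<Longrightarrow> det (submatrix B I UNIV) = 0"
  shows "det (A * B) = 0"
proof -
  let ?F = "{f. (\<forall>i\<in>{0..<k}. f i \<in> {0..<n}) \<and> (\<forall>i. i \<notin> {0..<k} \<longrightarrow> f i = i)}"
  have "det (A * B) = (\<Sum>f\<in>?F. det (mat\<^sub>r k k (\<lambda>i. A $$ (i, f i) \<cdot>\<^sub>v row B (f i))))"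
    unfolding mat_mul_finsum_alt[OF A B]
    by (rule det_linear_rows_sum) (use A B in auto)
  also have "\<dots> = 0"
  proof (rule sum.neutral, rule ballI)
    fix f assume "f \<in> ?F"
    then have f: "\<forall>i<k. f i < n" by auto
    have "det (mat\<^sub>r k k (\<lambda>i. A $$ (i, f i) \<cdot>\<^sub>v row B (f i))) =
        prod (\<lambda>i. A $$ (i, f i)) {0..<k} * det (mat\<^sub>r k k (\<lambda>i. row B (f i)))"
      by (rule det_rows_mul) (use B in auto)
    then show "det (mat\<^sub>r k k (\<lambda>i. A $$ (i, f i) \<cdot>\<^sub>v row B (f i))) = 0"
      using det_mat_of_rows_eq_0[OF B f minors] by simp
  qed
  finally show ?thesis .
qed

lemma submatrix_mult:
  assumes A: "A \<in> carrier_mat m n" and N: "N \<in> carrier_mat n p"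
    and I: "I \<subseteq> {..<m}" and J: "J \<subseteq> {..<p}"
  shows "submatrix (A * N) I J = submatrix A I UNIV * submatrix N UNIV J"
proof -
  have dims: "dim_row A = m" "dim_col A = n" "dim_row N = n" "dim_col N = p" using A N by auto
  have rows: "{i. i < m \<and> i \<in> I} = I" "{j. j < p \<and> j \<in> J} = J" "{l. l < n \<and> l \<in> UNIV} = {..<n}"
    using I J by auto
  show ?thesis
  proof (rule eq_matI)
    fix i j assume "i < dim_row (submatrix A I UNIV * submatrix N UNIV J)"
      and "j < dim_col (submatrix A I UNIV * submatrix N UNIV J)"
    then have i: "i < card I" and j: "j < card J" by (simp_all add: dim_submatrix dims rows)
    have "pick I i < m" "pick J j < p" using pick_in_set[of i I] pick_in_set[of j J] i j I J by auto
    then show "submatrix (A * N) I J $$ (i, j) = (submatrix A I UNIV * submatrix N UNIV J) $$ (i, j)"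
      using i j dims
      by (simp add: dim_submatrix rows submatrix_index scalar_prod_def lessThan_atLeast0 pick_UNIV)
  qed (simp_all add: dim_submatrix dims)
qed

lemma submatrix_transpose_mat:
  assumes I: "I \<subseteq> {..<dim_row A}" and J: "J \<subseteq> {..<dim_col A}"
  shows "submatrix (transpose_mat A) J I = transpose_mat (submatrix A I J)"
proof (rule eq_matI)
  fix i j assume "i < dim_row (transpose_mat (submatrix A I J))"
    and "j < dim_col (transpose_mat (submatrix A I J))"
  then have i: "i < card J" and j: "j < card I" using dim_submatrix_subset[OF I J] by auto
  have "pick I j < dim_row A" "pick J i < dim_col A" using pick_in_set[of j I] pick_in_set[of i J] i j I J by auto
  then show "submatrix (transpose_mat A) J I $$ (i, j) = transpose_mat (submatrix A I J) $$ (i, j)"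
    using i j I J dim_submatrix_subset[OF I J] by (simp add: submatrix_index_dim)
qed (use dim_submatrix_subset[OF I J] dim_submatrix_subset[of J "transpose_mat A" I] I J in auto)

lemma nonzero_minor_of_mult_right:
  fixes A N :: "'a::idom mat"
  assumes A: "A \<in> carrier_mat m n" and N: "N \<in> carrier_mat n p"
    and I: "I \<subseteq> {..<m}" and J: "J \<subseteq> {..<p}" and card: "card I = k" "card J = k"
    and nonzero: "det (submatrix (A * N) I J) \<noteq> 0"
  obtains I' where "I' \<subseteq> {..<n}" and "card I' = k" and "det (submatrix N I' J) \<noteq> 0"
proof -
  have "\<exists>I'. I' \<subseteq> {..<n} \<and> card I' = k \<and> det (submatrix N I' J) \<noteq> 0"
  proof (rule ccontr)
    assume none: "\<nexists>I'. I' \<subseteq> {..<n} \<and> card I' = k \<and> det (submatrix N I' J) \<noteq> 0"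
    have minors: "det (submatrix (submatrix N UNIV J) I' UNIV) = 0"
      if "I' \<subseteq> {..<n}" "card I' = k" for I'
      using none that unfolding submatrix_split[symmetric] by blast
    have dims: "dim_row A = m" "dim_col A = n" "dim_row N = n" "dim_col N = p" using A N by auto
    have rows: "{i. i < m \<and> i \<in> I} = I" "{j. j < p \<and> j \<in> J} = J" "{l. l < n \<and> l \<in> UNIV} = {..<n}"
      using I J by auto
    have "submatrix A I UNIV \<in> carrier_mat k n"
      unfolding carrier_mat_def by (simp add: dim_submatrix dims rows(1,3) card(1))
    moreover have "submatrix N UNIV J \<in> carrier_mat n k"
      unfolding carrier_mat_def by (simp add: dim_submatrix dims rows(2,3) card(2))
    ultimately
    have "det (submatrix (A * N) I J) = 0"
      unfolding submatrix_mult[OF A N I J] by (rule det_mult_eq_0_if_row_minors_eq_0[OF _ _ minors])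
    with nonzero show False ..
  qed
  then show ?thesis using that by blast
qed

lemma det_submatrix_transpose_mat:
  assumes "I \<subseteq> {..<dim_row A}" and "J \<subseteq> {..<dim_col A}" and "card I = card J"
  shows "det (submatrix (transpose_mat A) J I) = det (submatrix A I J)"
proof -
  have "submatrix A I J \<in> carrier_mat (card I) (card I)"
    by (rule carrier_matI) (simp_all only: dim_submatrix_subset[OF assms(1,2)] assms(3))
  then show ?thesis unfolding submatrix_transpose_mat[OF assms(1,2)] by (rule det_transpose)
qed

lemma nonzero_minor_of_mult_left:
  fixes N B :: "'a::idom mat"
  assumes N: "N \<in> carrier_mat n p" and B: "B \<in> carrier_mat p q"
    and I: "I \<subseteq> {..<n}" and J: "J \<subseteq> {..<q}" and card: "card I = k" "card J = k"
    and nonzero: "det (submatrix (N * B) I J) \<noteq> 0"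
  obtains J' where "J' \<subseteq> {..<p}" and "card J' = k" and "det (submatrix N I J') \<noteq> 0"
proof -
  have BN: "transpose_mat B \<in> carrier_mat q p" "transpose_mat N \<in> carrier_mat p n"
    using B N by auto
  have "det (submatrix (transpose_mat (N * B)) J I) = det (submatrix (N * B) I J)"
    by (rule det_submatrix_transpose_mat) (use I J N B card in auto)
  with nonzero have "det (submatrix (transpose_mat B * transpose_mat N) J I) \<noteq> 0"
    unfolding transpose_mult[OF N B] by simp
  then obtain J' where J': "J' \<subseteq> {..<p}" "card J' = k"
    and nonzero': "det (submatrix (transpose_mat N) J' I) \<noteq> 0"
    by (rule nonzero_minor_of_mult_right[OF BN J I card(2,1)])
  have "det (submatrix (transpose_mat N) J' I) = det (submatrix N I J')"
    by (rule det_submatrix_transpose_mat) (use I J' N card in auto)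
  with nonzero' show ?thesis using that J' by simp
qed

definition nonzero_minor_sizes :: "'a::idom mat \<Rightarrow> nat set" where
  "nonzero_minor_sizes A = {k. \<exists>I J. I \<subseteq> {..<dim_row A} \<and> J \<subseteq> {..<dim_col A} \<and>
     card I = k \<and> card J = k \<and> det (submatrix A I J) \<noteq> 0}"

lemma minor_rank_eq_Max: "minor_rank A = Max (nonzero_minor_sizes A)"
  unfolding minor_rank_def nonzero_minor_sizes_def ..

lemma zero_in_nonzero_minor_sizes: "0 \<in> nonzero_minor_sizes A"
proof -
  have "submatrix A {} {} = mat 0 0 (\<lambda>_. 0)"
    by (rule eq_matI) (simp_all add: dim_submatrix)
  then have "det (submatrix A {} {}) \<noteq> 0"
    by (simp add: det_def)
  then show ?thesis unfolding nonzero_minor_sizes_def by (intro CollectI exI[of _ "{}"]) simp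
qed

lemma finite_nonzero_minor_sizes: "finite (nonzero_minor_sizes A)"
proof (rule finite_subset)
  show "nonzero_minor_sizes A \<subseteq> {..dim_row A}"
  proof
    fix k assume "k \<in> nonzero_minor_sizes A"
    then obtain I where "I \<subseteq> {..<dim_row A}" "card I = k" unfolding nonzero_minor_sizes_def by blast
    then show "k \<in> {..dim_row A}" using card_mono[of "{..<dim_row A}" I] by simp
  qed
qed simp

lemma minor_rank_mult_le:
  fixes A F B :: "'a::idom mat"
  assumes A: "A \<in> carrier_mat m n" and F: "F \<in> carrier_mat n p" and B: "B \<in> carrier_mat p q"
  shows "minor_rank (A * F * B) \<le> minor_rank F"
  unfolding minor_rank_eq_Max
proof (rule Max_mono[OF _ _ finite_nonzero_minor_sizes])
  show "nonzero_minor_sizes (A * F * B) \<noteq> {}" using zero_in_nonzero_minor_sizes by blast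
  show "nonzero_minor_sizes (A * F * B) \<subseteq> nonzero_minor_sizes F"
  proof
    fix k assume "k \<in> nonzero_minor_sizes (A * F * B)"
    then obtain I J where I: "I \<subseteq> {..<m}" and J: "J \<subseteq> {..<q}" and card: "card I = k" "card J = k"
      and nonzero: "det (submatrix (A * F * B) I J) \<noteq> 0"
      unfolding nonzero_minor_sizes_def using A B by auto
    have AF: "A * F \<in> carrier_mat m p" using A F by auto
    obtain J' where J': "J' \<subseteq> {..<p}" "card J' = k" "det (submatrix (A * F) I J') \<noteq> 0"
      by (rule nonzero_minor_of_mult_left[OF AF B I J card nonzero])
    obtain I' where "I' \<subseteq> {..<n}" "card I' = k" "det (submatrix F I' J') \<noteq> 0"
      by (rule nonzero_minor_of_mult_right[OF A F I J'(1) card(1) J'(2,3)])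
    then show "k \<in> nonzero_minor_sizes F"
      unfolding nonzero_minor_sizes_def using F J' by auto
  qed
qed

section \<open>Bilinear forms on functions\<close>

definition bform :: "'a set \<Rightarrow> ('a \<Rightarrow> 'a \<Rightarrow> 'r::comm_ring_1) \<Rightarrow> ('a \<Rightarrow> 'r) \<Rightarrow> ('a \<Rightarrow> 'r) \<Rightarrow> 'r" where
  "bform G b u v = (\<Sum>x\<in>G. \<Sum>y\<in>G. u x * v y * b x y)"

lemma bform_indicator:
  assumes "finite G" and "X \<subseteq> G" and "Y \<subseteq> G"
  shows "bform G b (indicator X) (indicator Y) = bsum b X Y"
proof -
  have "bform G b (indicator X) (indicator Y) = (\<Sum>x\<in>G. of_bool (x \<in> X) * (\<Sum>y\<in>G. of_bool (y \<in> Y) * b x y))"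
    unfolding bform_def indicator_def by (simp add: sum_distrib_left mult.assoc)
  also have "\<dots> = (\<Sum>x\<in>X. \<Sum>y\<in>Y. b x y)"
    using assms by (simp add: sum_of_bool_mult_eq Int_absorb1)
  finally show ?thesis unfolding bsum_def .
qed

lemma bform_add_left: "bform G b (\<lambda>x. u x + v x) w = bform G b u w + bform G b v w"
  unfolding bform_def by (simp add: distrib_right sum.distrib)

lemma bform_add_right: "bform G b u (\<lambda>y. v y + w y) = bform G b u v + bform G b u w"
  unfolding bform_def by (simp add: distrib_left distrib_right sum.distrib)

lemma bform_scale_left: "bform G b (\<lambda>x. c * u x) v = c * bform G b u v"
  unfolding bform_def by (simp add: sum_distrib_left mult.assoc)

lemma bform_scale_right: "bform G b u (\<lambda>y. c * v y) = c * bform G b u v"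
  unfolding bform_def by (simp add: sum_distrib_left mult_ac)

lemma bform_diff_right: "bform G b u (\<lambda>y. v y - w y) = bform G b u v - bform G b u w"
  unfolding bform_def by (simp add: algebra_simps sum_subtractf)

lemma bform_diff_left: "bform G b (\<lambda>x. u x - v x) w = bform G b u w - bform G b v w"
  unfolding bform_def by (simp add: algebra_simps sum_subtractf)

lemma bform_sum_left: "bform G b (\<lambda>x. \<Sum>k\<in>K. f k x) v = (\<Sum>k\<in>K. bform G b (f k) v)"
proof -
  have "bform G b (\<lambda>x. \<Sum>k\<in>K. f k x) v = (\<Sum>x\<in>G. \<Sum>y\<in>G. \<Sum>k\<in>K. f k x * v y * b x y)"
    unfolding bform_def by (simp add: sum_distrib_right)
  also have "\<dots> = (\<Sum>x\<in>G. \<Sum>k\<in>K. \<Sum>y\<in>G. f k x * v y * b x y)"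
    by (rule sum.cong[OF refl], rule sum.swap)
  also have "\<dots> = (\<Sum>k\<in>K. bform G b (f k) v)"
    unfolding bform_def by (rule sum.swap)
  finally show ?thesis .
qed

lemma bform_sum_right: "bform G b u (\<lambda>y. \<Sum>k\<in>K. f k y) = (\<Sum>k\<in>K. bform G b u (f k))"
proof -
  have "bform G b u (\<lambda>y. \<Sum>k\<in>K. f k y) = (\<Sum>x\<in>G. \<Sum>y\<in>G. \<Sum>k\<in>K. u x * f k y * b x y)"
    unfolding bform_def by (simp add: sum_distrib_left sum_distrib_right)
  also have "\<dots> = (\<Sum>x\<in>G. \<Sum>k\<in>K. \<Sum>y\<in>G. u x * f k y * b x y)"
    by (rule sum.cong[OF refl], rule sum.swap)
  also have "\<dots> = (\<Sum>k\<in>K. bform G b u (f k))"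
    unfolding bform_def by (rule sum.swap)
  finally show ?thesis .
qed

lemma bform_swap:
  assumes "\<forall>x\<in>G. \<forall>y\<in>G. b x y = - b y x"
  shows "bform G b u v = - bform G b v u"
proof -
  have "bform G b v u = (\<Sum>x\<in>G. \<Sum>y\<in>G. v y * u x * b y x)"
    unfolding bform_def by (rule sum.swap)
  also have "\<dots> = (\<Sum>x\<in>G. \<Sum>y\<in>G. - (u x * v y * b x y))"
  proof (intro sum.cong refl)
    fix x y assume "x \<in> G" "y \<in> G"
    with assms have "b y x = - b x y" by blast
    then show "v y * u x * b y x = - (u x * v y * b x y)" by simp
  qed
  also have "\<dots> = - bform G b u v"
    unfolding bform_def by (simp add: sum_negf)
  finally show ?thesis by simp
qed

text \<open>Skew-symmetry alone only gives 2 bform G b u u = 0; the vanishing diagonal makes the form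
  alternating also in characteristic 2.\<close>

lemma bform_self_eq_0:
  assumes skew: "\<forall>x\<in>G. \<forall>y\<in>G. b x y = - b y x" and diag: "\<forall>x\<in>G. b x x = 0"
  shows "bform G b u u = 0"
proof -
  have "H \<subseteq> G \<Longrightarrow> bform H b u u = 0" if "finite H" for H
    using that
  proof (induction H rule: finite_induct)
    case empty
    then show ?case by (simp add: bform_def)
  next
    case (insert a H)
    then have a: "a \<in> G" and "H \<subseteq> G" by auto
    have cross: "(\<Sum>x\<in>H. u x * u a * b x a) = - (\<Sum>y\<in>H. u a * u y * b a y)"
      unfolding sum_negf[symmetric]
    proof (intro sum.cong refl)
      fix x assume "x \<in> H"
      with skew a \<open>H \<subseteq> G\<close> have "b x a = - b a x" by blast
      then show "u x * u a * b x a = - (u a * u x * b a x)" by simp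
    qed
    have "bform (insert a H) b u u = u a * u a * b a a + (\<Sum>y\<in>H. u a * u y * b a y)
        + (\<Sum>x\<in>H. u x * u a * b x a) + bform H b u u"
      unfolding bform_def using insert.hyps by (simp add: sum.distrib algebra_simps)
    then show ?case using cross insert.IH[OF \<open>H \<subseteq> G\<close>] diag a by simp
  qed
  then show ?thesis by (cases "finite G") (auto simp: bform_def)
qed

lemma gram_matrix_congruence:
  fixes P :: "'r::comm_ring_1 mat"
  assumes skew: "\<forall>x\<in>G. \<forall>y\<in>G. b x y = - b y x" and diag: "\<forall>x\<in>G. b x x = 0"
    and P: "P \<in> carrier_mat m n"
    and decomp: "\<And>i. i < m \<Longrightarrow> x i = (\<lambda>z. (\<Sum>k<n. P $$ (i, k) * y k z) + c i * u z)"
    and orth: "\<And>i. i < m \<Longrightarrow> bform G b u (\<lambda>z. \<Sum>k<n. P $$ (i, k) * y k z) = 0"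
  shows "mat m m (\<lambda>(i, j). bform G b (x i) (x j))
    = P * mat n n (\<lambda>(k, l). bform G b (y k) (y l)) * transpose_mat P"
proof (rule eq_matI)
  fix i j assume "i < dim_row (P * mat n n (\<lambda>(k, l). bform G b (y k) (y l)) * transpose_mat P)"
    and "j < dim_col (P * mat n n (\<lambda>(k, l). bform G b (y k) (y l)) * transpose_mat P)"
  then have i: "i < m" and j: "j < m" using P by auto
  define w where "w i = (\<lambda>z. \<Sum>k<n. P $$ (i, k) * y k z)" for i
  have x: "x i = (\<lambda>z. w i z + c i * u z)" "x j = (\<lambda>z. w j z + c j * u z)"
    using decomp[OF i] decomp[OF j] unfolding w_def by simp_all
  have "bform G b u (w j) = 0" "bform G b (w i) u = 0" "bform G b u u = 0"
    using orth[OF i] orth[OF j] bform_swap[OF skew, of "w i" u] bform_self_eq_0[OF skew diag]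
    unfolding w_def by simp_all
  then have "bform G b (x i) (x j) = bform G b (w i) (w j)"
    unfolding x by (simp add: bform_add_left bform_add_right bform_scale_left bform_scale_right)
  also have "\<dots> = (\<Sum>l<n. (\<Sum>k<n. P $$ (i, k) * bform G b (y k) (y l)) * P $$ (j, l))"
    unfolding w_def bform_sum_left bform_sum_right bform_scale_left bform_scale_right
    by (subst sum.swap) (simp add: sum_distrib_left sum_distrib_right mult_ac)
  also have "\<dots> = (P * mat n n (\<lambda>(k, l). bform G b (y k) (y l)) * transpose_mat P) $$ (i, j)"
    using i j P by (simp add: scalar_prod_def lessThan_atLeast0)
  finally show "mat m m (\<lambda>(i, j). bform G b (x i) (x j)) $$ (i, j)
      = (P * mat n n (\<lambda>(k, l). bform G b (y k) (y l)) * transpose_mat P) $$ (i, j)"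
    using i j by simp
qed (use P in auto)

section \<open>Fillings and the genus\<close>

lemma based_matrixD:
  assumes "based_matrix (G, s, b)"
  shows "finite G" and "s \<in> G" and "\<forall>x\<in>G. \<forall>y\<in>G. b x y = - b y x" and "\<forall>x\<in>G. b x x = 0"
  using assms unfolding based_matrix_def prod.case by blast+

lemma is_filling_iff:
  "is_filling (G, s, b) Xs \<longleftrightarrow>
     (\<forall>i<length Xs. \<forall>j<length Xs. i \<noteq> j \<longrightarrow> Xs ! i \<inter> Xs ! j = {}) \<and> \<Union> (set Xs) = G \<and>
     (\<forall>X\<in>set Xs. finite X \<and> card X \<le> 2) \<and> {s} \<in> set Xs"
  unfolding is_filling_def by simp

lemma filling_block_subset:
  assumes "is_filling (G, s, b) Xs" and "i < length Xs"
  shows "Xs ! i \<subseteq> G"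
  using assms nth_mem[OF assms(2)] unfolding is_filling_iff by blast

lemma filling_blocks_disjoint:
  assumes "is_filling (G, s, b) Xs" and "i < length Xs" and "j < length Xs" and "i \<noteq> j"
  shows "Xs ! i \<inter> Xs ! j = {}"
  using assms unfolding is_filling_iff by blast

lemma filling_block_card:
  assumes "is_filling (G, s, b) Xs" and "i < length Xs"
  shows "finite (Xs ! i)" and "card (Xs ! i) \<le> 2"
  using assms nth_mem[OF assms(2)] unfolding is_filling_iff by blast+

lemma filling_obtain_block:
  assumes "is_filling (G, s, b) Xs" and "x \<in> G"
  obtains i where "i < length Xs" and "x \<in> Xs ! i"
  using assms unfolding is_filling_iff by (metis UnionE in_set_conv_nth)

lemma filling_obtain_base_block:
  assumes "is_filling (G, s, b) Xs"
  obtains i where "i < length Xs" and "Xs ! i = {s}"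
  using assms unfolding is_filling_iff by (metis in_set_conv_nth)

lemma filling_exists:
  assumes "based_matrix T"
  shows "\<exists>Xs. is_filling T Xs"
proof -
  obtain G s b where T: "T = (G, s, b)" by (cases T)
  note G = based_matrixD[OF assms[unfolded T]]
  obtain xs where xs: "set xs = G" "distinct xs" using finite_distinct_list[OF G(1)] by blast
  have "is_filling (G, s, b) (map (\<lambda>x. {x}) xs)"
    unfolding is_filling_iff using xs G(2) by (auto simp: nth_eq_iff_index_eq)
  then show ?thesis unfolding T ..
qed

lemma genus_le_if_dominated:
  assumes "\<exists>Xs. is_filling T Xs"
    and dominated: "\<And>Xs. is_filling T Xs \<Longrightarrow> \<exists>Ys. is_filling T' Ys \<and> filling_sigma T' Ys \<le> filling_sigma T Xs"
  shows "genus T' \<le> genus T"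
  unfolding genus_def
proof (rule cInf_mono)
  show "{filling_sigma T Xs |Xs. is_filling T Xs} \<noteq> {}" using assms(1) by blast
  show "bdd_below {filling_sigma T' Ys |Ys. is_filling T' Ys}"
    by (rule bdd_belowI[of _ 0]) (auto simp: filling_sigma_def)
  fix x assume "x \<in> {filling_sigma T Xs |Xs. is_filling T Xs}"
  then obtain Xs where "is_filling T Xs" and x: "x = filling_sigma T Xs" by blast
  then obtain Ys where "is_filling T' Ys" "filling_sigma T' Ys \<le> x" using dominated by blast
  then show "\<exists>y\<in>{filling_sigma T' Ys |Ys. is_filling T' Ys}. y \<le> x" by blast
qed

lemma filling_sigma_cong:
  assumes "\<forall>i<length Xs. Xs ! i \<subseteq> G" and "\<forall>x\<in>G. \<forall>y\<in>G. b' x y = b x y"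
  shows "filling_sigma (G', s', b') Xs = filling_sigma (G, s, b) Xs"
proof -
  have "bsum b' (Xs ! i) (Xs ! j) = bsum b (Xs ! i) (Xs ! j)" if "i < length Xs" "j < length Xs" for i j
    using assms that unfolding bsum_def by (intro sum.cong refl) blast
  then have "filling_matrix (G', s', b') Xs = filling_matrix (G, s, b) Xs"
    unfolding filling_matrix_def by (intro eq_matI) auto
  then show ?thesis unfolding filling_sigma_def by simp
qed

lemma filling_sigma_le_if_indicator_decomposition:
  fixes b :: "'a \<Rightarrow> 'a \<Rightarrow> 'r::idom"
  assumes based: "based_matrix (G, s, b)"
    and Ws: "\<forall>i<length Ws. Ws ! i \<subseteq> G" and Zs: "\<forall>k<length Zs. Zs ! k \<subseteq> G"
    and decomp: "\<And>i. i < length Ws \<Longrightarrow> indicator (Ws ! i)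
      = (\<lambda>z. (\<Sum>k<length Zs. p i k * indicator (Zs ! k) z) + c i * u z)"
    and orth: "\<And>i. i < length Ws \<Longrightarrow>
      bform G b u (\<lambda>z. \<Sum>k<length Zs. p i k * indicator (Zs ! k) z) = 0"
  shows "filling_sigma (G, s, b) Ws \<le> filling_sigma (G, s, b) Zs"
proof -
  note G = based_matrixD[OF based]
  define P where "P = mat (length Ws) (length Zs) (\<lambda>(i, k). p i k)"
  have P: "P \<in> carrier_mat (length Ws) (length Zs)" unfolding P_def by simp
  have P_sum: "(\<Sum>k<length Zs. P $$ (i, k) * f k) = (\<Sum>k<length Zs. p i k * f k)"
    if "i < length Ws" for i and f :: "nat \<Rightarrow> 'r"
    unfolding P_def using that by (intro sum.cong) auto
  have gram: "filling_matrix (G, s, b) Xs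
      = mat (length Xs) (length Xs) (\<lambda>(i, j). bform G b (indicator (Xs ! i)) (indicator (Xs ! j)))"
    if "\<forall>i<length Xs. Xs ! i \<subseteq> G" for Xs
    unfolding filling_matrix_def prod.case
    by (intro eq_matI) (auto simp: that bform_indicator[OF G(1)])
  have "filling_matrix (G, s, b) Ws = P * filling_matrix (G, s, b) Zs * transpose_mat P"
    unfolding gram[OF Ws] gram[OF Zs]
    by (rule gram_matrix_congruence[OF G(3,4) P, where c = c and u = u]) (simp_all add: P_sum decomp orth)
  moreover have "filling_matrix (G, s, b) Zs \<in> carrier_mat (length Zs) (length Zs)"
    unfolding filling_matrix_def by simp
  ultimately have "minor_rank (filling_matrix (G, s, b) Ws) \<le> minor_rank (filling_matrix (G, s, b) Zs)"
    using minor_rank_mult_le[OF P _ transpose_carrier_mat[THEN iffD2, OF P]] by simp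
  then show ?thesis unfolding filling_sigma_def by simp
qed

section \<open>Invariance under isomorphism\<close>

lemma is_filling_image:
  assumes f: "bij_betw f G G'" and Xs: "is_filling (G, s, b) Xs"
  shows "is_filling (G', f s, b') (map ((`) f) Xs)"
  unfolding is_filling_iff
proof (intro conjI allI impI ballI)
  fix i j assume "i < length (map ((`) f) Xs)" "j < length (map ((`) f) Xs)" "i \<noteq> j"
  then have "i < length Xs" "j < length Xs" "i \<noteq> j" by simp_all
  moreover have "f ` (Xs ! i \<inter> Xs ! j) = f ` (Xs ! i) \<inter> f ` (Xs ! j)"
    using calculation by (intro inj_on_image_Int[OF bij_betw_imp_inj_on[OF f]] filling_block_subset[OF Xs])
  ultimately show "map ((`) f) Xs ! i \<inter> map ((`) f) Xs ! j = {}"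
    using filling_blocks_disjoint[OF Xs] by simp
next
  have "\<Union> (set Xs) = G" using Xs unfolding is_filling_iff by blast
  then show "\<Union> (set (map ((`) f) Xs)) = G'"
    using bij_betw_imp_surj_on[OF f] by (simp add: image_Union[symmetric])
next
  fix X assume "X \<in> set (map ((`) f) Xs)"
  then obtain Y where "Y \<in> set Xs" and X: "X = f ` Y" by auto
  then have "finite Y" "card Y \<le> 2" using Xs unfolding is_filling_iff by blast+
  then show "finite X" "card X \<le> 2" using card_image_le[of Y f] unfolding X by simp_all
next
  have "{s} \<in> set Xs" using Xs unfolding is_filling_iff by blast
  then show "{f s} \<in> set (map ((`) f) Xs)" by (auto intro: rev_image_eqI[of "{s}"])
qed

lemma filling_sigma_image:
  assumes inj: "inj_on f G" and Xs: "\<forall>i<length Xs. Xs ! i \<subseteq> G"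
    and b': "\<forall>x\<in>G. \<forall>y\<in>G. b' (f x) (f y) = b x y"
  shows "filling_sigma (G', s', b') (map ((`) f) Xs) = filling_sigma (G, s, b) Xs"
proof -
  have bsum: "bsum b' (f ` X) (f ` Y) = bsum b X Y" if "X \<subseteq> G" "Y \<subseteq> G" for X Y
  proof -
    have "inj_on f X" "inj_on f Y" using inj_on_subset[OF inj] that by auto
    then have "bsum b' (f ` X) (f ` Y) = (\<Sum>x\<in>X. \<Sum>y\<in>Y. b' (f x) (f y))"
      unfolding bsum_def by (simp add: sum.reindex)
    also have "\<dots> = bsum b X Y"
      unfolding bsum_def using b' that by (intro sum.cong refl) blast
    finally show ?thesis .
  qed
  have "filling_matrix (G', s', b') (map ((`) f) Xs) = filling_matrix (G, s, b) Xs"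
    unfolding filling_matrix_def prod.case
  proof (rule eq_matI)
    fix i j assume "i < dim_row (mat (length Xs) (length Xs) (\<lambda>(i, j). bsum b (Xs ! i) (Xs ! j)))"
      "j < dim_col (mat (length Xs) (length Xs) (\<lambda>(i, j). bsum b (Xs ! i) (Xs ! j)))"
    then have "i < length Xs" "j < length Xs" by simp_all
    then show "mat (length (map ((`) f) Xs)) (length (map ((`) f) Xs))
        (\<lambda>(i, j). bsum b' (map ((`) f) Xs ! i) (map ((`) f) Xs ! j)) $$ (i, j)
      = mat (length Xs) (length Xs) (\<lambda>(i, j). bsum b (Xs ! i) (Xs ! j)) $$ (i, j)"
      using bsum Xs by simp
  qed simp_all
  then show ?thesis unfolding filling_sigma_def by simp
qed

lemma bm_iso_sym:
  assumes "bm_iso T T'"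
  shows "bm_iso T' T"
proof -
  obtain G s b G' s' b' where T: "T = (G, s, b)" and T': "T' = (G', s', b')"
    by (cases T, cases T')
  have based: "based_matrix (G, s, b)" "based_matrix (G', s', b')"
    and "\<exists>f. bij_betw f G G' \<and> f s = s' \<and> (\<forall>x\<in>G. \<forall>y\<in>G. b' (f x) (f y) = b x y)"
    using assms unfolding bm_iso_def T T' prod.case by blast+
  then obtain f where f: "bij_betw f G G'" "f s = s'" and b': "\<forall>x\<in>G. \<forall>y\<in>G. b' (f x) (f y) = b x y"
    by blast
  let ?g = "inv_into G f"
  have g: "bij_betw ?g G' G" by (rule bij_betw_inv_into[OF f(1)])
  have "?g s' = s" using bij_betw_inv_into_left[OF f(1) based_matrixD(2)[OF based(1)]] f(2) by simp
  moreover have "b (?g x) (?g y) = b' x y" if "x \<in> G'" "y \<in> G'" for x y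
  proof -
    have "?g x \<in> G" "?g y \<in> G" using g that by (auto dest: bij_betwE)
    then have "b (?g x) (?g y) = b' (f (?g x)) (f (?g y))" using b' by simp
    also have "\<dots> = b' x y" using bij_betw_inv_into_right[OF f(1)] that by simp
    finally show ?thesis .
  qed
  ultimately show ?thesis
    unfolding bm_iso_def T T' prod.case using based g by blast
qed

lemma genus_le_if_iso:
  assumes "bm_iso T T'"
  shows "genus T' \<le> genus T"
proof -
  obtain G s b G' s' b' where T: "T = (G, s, b)" and T': "T' = (G', s', b')"
    by (cases T, cases T')
  from assms obtain f where based: "based_matrix T"
    and f: "bij_betw f G G'" "f s = s'" "\<forall>x\<in>G. \<forall>y\<in>G. b' (f x) (f y) = b x y"
    unfolding bm_iso_def T T' by auto
  show ?thesis
  proof (rule genus_le_if_dominated[OF filling_exists[OF based]])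
    fix Xs assume Xs: "is_filling T Xs"
    have "is_filling T' (map ((`) f) Xs)"
      using is_filling_image[OF f(1) Xs[unfolded T]] f(2) unfolding T' by simp
    moreover have "filling_sigma T' (map ((`) f) Xs) = filling_sigma T Xs"
      unfolding T T' using filling_block_subset[OF Xs[unfolded T]]
      by (intro filling_sigma_image[OF bij_betw_imp_inj_on[OF f(1)] _ f(3)]) blast
    ultimately show "\<exists>Ys. is_filling T' Ys \<and> filling_sigma T' Ys \<le> filling_sigma T Xs" by auto
  qed
qed

lemma genus_eq_if_iso: "bm_iso T T' \<Longrightarrow> genus T = genus T'"
  using genus_le_if_iso bm_iso_sym by (metis order_antisym)

section \<open>Invariance under elementary extensions\<close>

text \<open>One locale covers all three elementary extensions: M1 is the case g1 = g2, d = 0; M2 is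
  g1 = g2, d = 1; M3 is g1 \<noteq> g2, d = 1.\<close>

locale elementary_extension =
  fixes G :: "'a set" and s :: 'a and b :: "'a \<Rightarrow> 'a \<Rightarrow> 'r::idom"
    and G' :: "'a set" and b' :: "'a \<Rightarrow> 'a \<Rightarrow> 'r"
    and g\<^sub>1 g\<^sub>2 :: 'a and d :: 'r
  assumes based: "based_matrix (G, s, b)" and based': "based_matrix (G', s, b')"
    and new: "g\<^sub>1 \<notin> G" "g\<^sub>2 \<notin> G" and extends: "G' = G \<union> {g\<^sub>1, g\<^sub>2}"
    and agree: "\<forall>x\<in>G. \<forall>y\<in>G. b' x y = b x y"
    and new_rows: "\<forall>y\<in>G. (\<Sum>x\<in>{g\<^sub>1, g\<^sub>2}. b' x y) = d * b s y"
begin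

definition defect :: "'a \<Rightarrow> 'r" where
  "defect z = indicator {g\<^sub>1, g\<^sub>2} z - d * indicator {s} z"

lemma s_in_G: "s \<in> G"
  using based_matrixD(2)[OF based] .

lemma bform_defect_indicator:
  assumes "W \<subseteq> G"
  shows "bform G' b' defect (indicator W) = 0"
proof -
  note G' = based_matrixD[OF based']
  have "{g\<^sub>1, g\<^sub>2} \<subseteq> G'" "{s} \<subseteq> G'" "W \<subseteq> G'" using extends s_in_G assms by auto
  then have "bform G' b' defect (indicator W) = bsum b' {g\<^sub>1, g\<^sub>2} W - d * bsum b' {s} W"
    unfolding defect_def
    by (simp add: bform_diff_left bform_scale_left bform_indicator[OF G'(1)])
  also have "bsum b' {g\<^sub>1, g\<^sub>2} W = (\<Sum>y\<in>W. d * b s y)"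
    unfolding bsum_def using new_rows assms by (subst sum.swap) (intro sum.cong refl, blast)
  also have "bsum b' {s} W = (\<Sum>y\<in>W. b s y)"
    unfolding bsum_def using agree s_in_G assms by (simp, intro sum.cong refl, blast)
  finally show ?thesis by (simp add: sum_distrib_left)
qed

lemma bform_defect_self: "bform G' b' defect defect = 0"
  using based_matrixD(3,4)[OF based'] by (rule bform_self_eq_0)

lemma is_filling_append_new:
  assumes Xs: "is_filling (G, s, b) Xs"
  shows "is_filling (G', s, b') (Xs @ [{g\<^sub>1, g\<^sub>2}])"
proof -
  have "Xs ! i \<inter> {g\<^sub>1, g\<^sub>2} = {}" if "i < length Xs" for i
    using filling_block_subset[OF Xs that] new by blast
  then have "(Xs @ [{g\<^sub>1, g\<^sub>2}]) ! i \<inter> (Xs @ [{g\<^sub>1, g\<^sub>2}]) ! j = {}"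
    if "i < Suc (length Xs)" "j < Suc (length Xs)" "i \<noteq> j" for i j
    using that filling_blocks_disjoint[OF Xs, of i j]
    by (cases "i < length Xs"; cases "j < length Xs") (auto simp: nth_append)
  moreover have "card {g\<^sub>1, g\<^sub>2} \<le> 2" by (simp add: card_insert_if)
  ultimately show ?thesis
    using Xs extends unfolding is_filling_iff by auto
qed

lemma filling_sigma_append_new_le:
  assumes Xs: "is_filling (G, s, b) Xs"
  shows "filling_sigma (G', s, b') (Xs @ [{g\<^sub>1, g\<^sub>2}]) \<le> filling_sigma (G, s, b) Xs"
proof -
  let ?n = "length Xs" and ?Ys = "Xs @ [{g\<^sub>1, g\<^sub>2}]"
  obtain si where si: "si < ?n" "Xs ! si = {s}" by (rule filling_obtain_base_block[OF Xs])
  have XsG: "\<forall>k<?n. Xs ! k \<subseteq> G" using filling_block_subset[OF Xs] by blast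
  then have XsG': "\<forall>k<?n. Xs ! k \<subseteq> G'" using extends by blast
  define p where "p i k = (if i < ?n then of_bool (k = i) else of_bool (k = si) * d)" for i k
  define c :: "nat \<Rightarrow> 'r" where "c i = of_bool (i = ?n)" for i
  have p_sum: "(\<Sum>k<?n. p i k * indicator (Xs ! k) z)
      = (if i < ?n then indicator (Xs ! i) z else d * indicator {s} z)" for i z
    using si unfolding p_def by (simp add: sum_of_bool_mult_eq mult.assoc)
  have "filling_sigma (G', s, b') ?Ys \<le> filling_sigma (G', s, b') Xs"
  proof (rule filling_sigma_le_if_indicator_decomposition[OF based', where p = p and c = c and u = defect])
    show "\<forall>i<length ?Ys. ?Ys ! i \<subseteq> G'"
      using filling_block_subset[OF is_filling_append_new[OF Xs]] by blast
    show "\<forall>k<?n. Xs ! k \<subseteq> G'" by (rule XsG')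
    fix i assume "i < length ?Ys"
    then show "indicator (?Ys ! i) = (\<lambda>z. (\<Sum>k<?n. p i k * indicator (Xs ! k) z) + c i * defect z)"
      by (intro HOL.ext) (auto simp: p_sum c_def defect_def nth_append)
    show "bform G' b' defect (\<lambda>z. \<Sum>k<?n. p i k * indicator (Xs ! k) z) = 0"
      using XsG by (simp add: bform_sum_right bform_scale_right bform_defect_indicator)
  qed
  also have "filling_sigma (G', s, b') Xs = filling_sigma (G, s, b) Xs"
    by (rule filling_sigma_cong[OF XsG agree])
  finally show ?thesis .
qed

text \<open>The block of g2 is emptied rather than removed, so that blocks keep their indices.\<close>

definition merge_new_blocks :: "'a set list \<Rightarrow> nat \<Rightarrow> nat \<Rightarrow> 'a set list" where
  "merge_new_blocks Ys a\<^sub>1 a\<^sub>2 = Ys[a\<^sub>2 := {}, a\<^sub>1 := (Ys ! a\<^sub>1 \<union> Ys ! a\<^sub>2) - {g\<^sub>1, g\<^sub>2}]"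

context
  fixes Ys a\<^sub>1 a\<^sub>2 si
  assumes Ys: "is_filling (G', s, b') Ys"
    and a\<^sub>1: "a\<^sub>1 < length Ys" "g\<^sub>1 \<in> Ys ! a\<^sub>1" and a\<^sub>2: "a\<^sub>2 < length Ys" "g\<^sub>2 \<in> Ys ! a\<^sub>2"
    and si: "si < length Ys" "Ys ! si = {s}"
begin

lemma length_merge_new_blocks: "length (merge_new_blocks Ys a\<^sub>1 a\<^sub>2) = length Ys"
  unfolding merge_new_blocks_def by simp

lemma nth_merge_new_blocks:
  assumes "i < length Ys"
  shows "merge_new_blocks Ys a\<^sub>1 a\<^sub>2 ! i = (if i = a\<^sub>1 then (Ys ! a\<^sub>1 \<union> Ys ! a\<^sub>2) - {g\<^sub>1, g\<^sub>2}
    else if i = a\<^sub>2 then {} else Ys ! i)"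
  using assms a\<^sub>1(1) a\<^sub>2(1) unfolding merge_new_blocks_def by (simp add: nth_list_update)

lemma base_block_not_merged: "si \<noteq> a\<^sub>1" "si \<noteq> a\<^sub>2"
  using si a\<^sub>1(2) a\<^sub>2(2) new s_in_G by auto

lemma unmerged_block_subset:
  assumes "i < length Ys" "i \<noteq> a\<^sub>1" "i \<noteq> a\<^sub>2"
  shows "Ys ! i \<subseteq> G"
proof -
  have "g\<^sub>1 \<notin> Ys ! i" "g\<^sub>2 \<notin> Ys ! i"
    using filling_blocks_disjoint[OF Ys] assms a\<^sub>1 a\<^sub>2 by blast+
  then show ?thesis using filling_block_subset[OF Ys assms(1)] extends by blast
qed

lemma merge_new_blocks_subset:
  assumes "i < length Ys"
  shows "merge_new_blocks Ys a\<^sub>1 a\<^sub>2 ! i \<subseteq> G"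
  using nth_merge_new_blocks[OF assms] unmerged_block_subset[OF assms] extends
    filling_block_subset[OF Ys a\<^sub>1(1)] filling_block_subset[OF Ys a\<^sub>2(1)] by auto

lemma merge_new_blocks_disjoint:
  assumes i: "i < length Ys" and j: "j < length Ys" and "i \<noteq> j"
  shows "merge_new_blocks Ys a\<^sub>1 a\<^sub>2 ! i \<inter> merge_new_blocks Ys a\<^sub>1 a\<^sub>2 ! j = {}"
proof -
  note disj = filling_blocks_disjoint[OF Ys]
  note nth = nth_merge_new_blocks[OF i] nth_merge_new_blocks[OF j]
  consider "i = a\<^sub>1" | "j = a\<^sub>1" | "i \<noteq> a\<^sub>1" "j \<noteq> a\<^sub>1" by blast
  then show ?thesis
  proof cases
    case 1
    then show ?thesis using disj[OF j a\<^sub>1(1)] disj[OF j a\<^sub>2(1)] \<open>i \<noteq> j\<close> unfolding nth by auto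
  next
    case 2
    then show ?thesis using disj[OF i a\<^sub>1(1)] disj[OF i a\<^sub>2(1)] \<open>i \<noteq> j\<close> unfolding nth by auto
  next
    case 3
    then show ?thesis using disj[OF i j \<open>i \<noteq> j\<close>] unfolding nth by auto
  qed
qed

lemma Union_merge_new_blocks: "\<Union> (set (merge_new_blocks Ys a\<^sub>1 a\<^sub>2)) = G"
proof
  let ?Xs = "merge_new_blocks Ys a\<^sub>1 a\<^sub>2"
  show "\<Union> (set ?Xs) \<subseteq> G"
  proof
    fix x assume "x \<in> \<Union> (set ?Xs)"
    then obtain i where "i < length Ys" "x \<in> ?Xs ! i"
      by (auto simp: in_set_conv_nth length_merge_new_blocks)
    then show "x \<in> G" using merge_new_blocks_subset by blast
  qed
  show "G \<subseteq> \<Union> (set ?Xs)"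
  proof
    fix x assume "x \<in> G"
    then obtain k where k: "k < length Ys" "x \<in> Ys ! k"
      using filling_obtain_block[OF Ys] extends by blast
    have "x \<notin> {g\<^sub>1, g\<^sub>2}" using \<open>x \<in> G\<close> new by auto
    then have "x \<in> ?Xs ! (if k = a\<^sub>2 then a\<^sub>1 else k)"
      using k nth_merge_new_blocks a\<^sub>1(1) by auto
    moreover have "(if k = a\<^sub>2 then a\<^sub>1 else k) < length ?Xs"
      using k(1) a\<^sub>1(1) by (simp add: length_merge_new_blocks)
    ultimately show "x \<in> \<Union> (set ?Xs)" by (meson UnionI nth_mem)
  qed
qed

lemma merge_new_blocks_card:
  assumes i: "i < length Ys"
  shows "finite (merge_new_blocks Ys a\<^sub>1 a\<^sub>2 ! i)" and "card (merge_new_blocks Ys a\<^sub>1 a\<^sub>2 ! i) \<le> 2"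
proof -
  let ?X = "merge_new_blocks Ys a\<^sub>1 a\<^sub>2 ! i"
  have "finite ?X \<and> card ?X \<le> 2"
  proof (cases "i = a\<^sub>1")
    case True
    let ?A = "Ys ! a\<^sub>1 - {g\<^sub>1}" and ?B = "Ys ! a\<^sub>2 - {g\<^sub>2}"
    have sub: "?X \<subseteq> ?A \<union> ?B" using nth_merge_new_blocks[OF i] True by auto
    have fin: "finite ?A" "finite ?B"
      using filling_block_card(1)[OF Ys a\<^sub>1(1)] filling_block_card(1)[OF Ys a\<^sub>2(1)] by simp_all
    have "card ?A \<le> 1" "card ?B \<le> 1"
      using filling_block_card[OF Ys a\<^sub>1(1)] filling_block_card[OF Ys a\<^sub>2(1)] a\<^sub>1(2) a\<^sub>2(2)
      by (simp_all add: card_Diff_singleton)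
    moreover have "card ?X \<le> card (?A \<union> ?B)" using card_mono[OF _ sub] fin by simp
    moreover have "card (?A \<union> ?B) \<le> card ?A + card ?B" by (rule card_Un_le)
    moreover have "finite ?X" using finite_subset[OF sub] fin by simp
    ultimately show ?thesis by linarith
  next
    case False
    then have sub: "?X \<subseteq> Ys ! i" using nth_merge_new_blocks[OF i] by auto
    have "finite (Ys ! i)" "card (Ys ! i) \<le> 2" using filling_block_card[OF Ys i] by simp_all
    then show ?thesis using finite_subset[OF sub] card_mono[OF _ sub] by simp
  qed
  then show "finite ?X" "card ?X \<le> 2" by blast+
qed

lemma is_filling_merge_new_blocks: "is_filling (G, s, b) (merge_new_blocks Ys a\<^sub>1 a\<^sub>2)"
proof -
  let ?Xs = "merge_new_blocks Ys a\<^sub>1 a\<^sub>2"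
  have "?Xs ! si = {s}"
    using nth_merge_new_blocks[OF si(1)] base_block_not_merged si(2) by simp
  then have "{s} \<in> set ?Xs" using si(1) by (metis length_merge_new_blocks nth_mem)
  then show ?thesis
    unfolding is_filling_iff using merge_new_blocks_disjoint Union_merge_new_blocks merge_new_blocks_card
    by (auto simp: length_merge_new_blocks in_set_conv_nth)
qed

definition merge_coeff :: "nat \<Rightarrow> nat \<Rightarrow> 'r" where
  "merge_coeff i k = (if i = a\<^sub>1 then indicator {a\<^sub>1, a\<^sub>2} k - of_bool (k = si) * d
     else if i = a\<^sub>2 then 0 else of_bool (k = i))"

lemma sum_indicator_merged_blocks:
  "(\<Sum>k<length Ys. indicator {a\<^sub>1, a\<^sub>2} k * indicator (Ys ! k) z) = (indicator (Ys ! a\<^sub>1 \<union> Ys ! a\<^sub>2) z :: 'r)"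
proof -
  have "{a\<^sub>1, a\<^sub>2} \<subseteq> {..<length Ys}" using a\<^sub>1(1) a\<^sub>2(1) by auto
  then have "(\<Sum>k<length Ys. indicator {a\<^sub>1, a\<^sub>2} k * indicator (Ys ! k) z)
      = (\<Sum>k\<in>{a\<^sub>1, a\<^sub>2}. indicator (Ys ! k) z :: 'r)"
    by (intro sum.mono_neutral_cong_right) auto
  also have "\<dots> = indicator (Ys ! a\<^sub>1 \<union> Ys ! a\<^sub>2) z"
    using filling_blocks_disjoint[OF Ys a\<^sub>1(1) a\<^sub>2(1)]
    by (cases "a\<^sub>1 = a\<^sub>2") (simp_all add: indicator_union_arith indicator_inter_arith[symmetric])
  finally show ?thesis .
qed

lemma sum_merge_coeff:
  assumes i: "i < length Ys"
  shows "(\<Sum>k<length Ys. merge_coeff i k * indicator (Ys ! k) z) = (if i = a\<^sub>1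
    then indicator (Ys ! a\<^sub>1 \<union> Ys ! a\<^sub>2) z - d * indicator {s} z
    else if i = a\<^sub>2 then 0 else indicator (Ys ! i) z)"
proof -
  have "(\<Sum>k<length Ys. of_bool (k = si) * d * indicator (Ys ! k) z) = d * indicator {s} z"
    using si by (simp add: sum_of_bool_mult_eq mult.assoc)
  then have "(\<Sum>k<length Ys. merge_coeff a\<^sub>1 k * indicator (Ys ! k) z)
      = indicator (Ys ! a\<^sub>1 \<union> Ys ! a\<^sub>2) z - d * indicator {s} z"
    unfolding merge_coeff_def
    by (simp only: simp_thms(6) if_True left_diff_distrib sum_subtractf sum_indicator_merged_blocks)
  moreover have "(\<Sum>k<length Ys. of_bool (k = i) * indicator (Ys ! k) z) = (indicator (Ys ! i) z :: 'r)"
    using i by (simp add: sum_of_bool_mult_eq)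
  ultimately show ?thesis unfolding merge_coeff_def by auto
qed

lemma indicator_merge_new_blocks:
  assumes i: "i < length Ys"
  shows "indicator (merge_new_blocks Ys a\<^sub>1 a\<^sub>2 ! i) = (\<lambda>z.
    (\<Sum>k<length Ys. merge_coeff i k * indicator (Ys ! k) z) + (if i = a\<^sub>1 then -1 else 0) * defect z)"
proof (rule HOL.ext)
  fix z
  show "indicator (merge_new_blocks Ys a\<^sub>1 a\<^sub>2 ! i) z = (\<Sum>k<length Ys. merge_coeff i k * indicator (Ys ! k) z)
      + (if i = a\<^sub>1 then -1 else 0) * defect z"
    unfolding sum_merge_coeff[OF i] defect_def nth_merge_new_blocks[OF i]
    using a\<^sub>1(2) a\<^sub>2(2) by (auto simp: indicator_def)
qed

lemma filling_sigma_merge_new_blocks_le: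
  "filling_sigma (G, s, b) (merge_new_blocks Ys a\<^sub>1 a\<^sub>2) \<le> filling_sigma (G', s, b') Ys"
proof -
  let ?Xs = "merge_new_blocks Ys a\<^sub>1 a\<^sub>2"
  have XsG: "\<forall>i<length ?Xs. ?Xs ! i \<subseteq> G"
    using merge_new_blocks_subset by (simp add: length_merge_new_blocks)
  have orth: "bform G' b' defect (\<lambda>z. \<Sum>k<length Ys. merge_coeff i k * indicator (Ys ! k) z) = 0"
    if "i < length ?Xs" for i
  proof -
    have i: "i < length Ys" using that by (simp add: length_merge_new_blocks)
    have "(\<lambda>z. \<Sum>k<length Ys. merge_coeff i k * indicator (Ys ! k) z)
        = (\<lambda>z. indicator (?Xs ! i) z - (if i = a\<^sub>1 then -1 else 0) * defect z)"
      unfolding indicator_merge_new_blocks[OF i] by simp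
    then show ?thesis
      using XsG that
      by (simp add: bform_diff_right bform_scale_right bform_defect_indicator bform_defect_self)
  qed
  have "filling_sigma (G', s, b') ?Xs \<le> filling_sigma (G', s, b') Ys"
  proof (rule filling_sigma_le_if_indicator_decomposition[OF based' _ _ _ orth])
    show "\<forall>i<length ?Xs. ?Xs ! i \<subseteq> G'" using XsG extends by blast
    show "\<forall>k<length Ys. Ys ! k \<subseteq> G'" using filling_block_subset[OF Ys] by blast
    show "indicator (?Xs ! i) = (\<lambda>z. (\<Sum>k<length Ys. merge_coeff i k * indicator (Ys ! k) z)
        + (if i = a\<^sub>1 then -1 else 0) * defect z)" if "i < length ?Xs" for i
      using that by (simp add: indicator_merge_new_blocks length_merge_new_blocks)
  qed
  also have "filling_sigma (G', s, b') ?Xs = filling_sigma (G, s, b) ?Xs"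
    by (rule filling_sigma_cong[OF XsG agree])
  finally show ?thesis .
qed

end

lemma filling_restrict:
  assumes Ys: "is_filling (G', s, b') Ys"
  shows "\<exists>Xs. is_filling (G, s, b) Xs \<and> filling_sigma (G, s, b) Xs \<le> filling_sigma (G', s, b') Ys"
proof -
  obtain a\<^sub>1 where a\<^sub>1: "a\<^sub>1 < length Ys" "g\<^sub>1 \<in> Ys ! a\<^sub>1"
    using filling_obtain_block[OF Ys] extends by blast
  obtain a\<^sub>2 where a\<^sub>2: "a\<^sub>2 < length Ys" "g\<^sub>2 \<in> Ys ! a\<^sub>2"
    using filling_obtain_block[OF Ys] extends by blast
  obtain si where si: "si < length Ys" "Ys ! si = {s}" by (rule filling_obtain_base_block[OF Ys])
  show ?thesis
    using is_filling_merge_new_blocks[OF Ys a\<^sub>1 a\<^sub>2 si] filling_sigma_merge_new_blocks_le[OF Ys a\<^sub>1 a\<^sub>2 si]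
    by blast
qed

lemma genus_eq: "genus (G, s, b) = genus (G', s, b')"
proof (rule antisym)
  show "genus (G', s, b') \<le> genus (G, s, b)"
    using is_filling_append_new filling_sigma_append_new_le
    by (intro genus_le_if_dominated[OF filling_exists[OF based]]) blast
  show "genus (G, s, b) \<le> genus (G', s, b')"
    using filling_restrict by (intro genus_le_if_dominated[OF filling_exists[OF based']]) blast
qed

end

lemma genus_eq_if_elem_ext:
  assumes "elem_ext T T'"
  shows "genus T = genus T'"
proof -
  obtain G s b G' s' b' where T: "T = (G, s, b)" and T': "T' = (G', s', b')"
    by (cases T, cases T')
  from assms consider (M1) "ext_M1 T T'" | (M2) "ext_M2 T T'" | (M3) "ext_M3 T T'"
    unfolding elem_ext_def by blast
  then show ?thesis
  proof cases
    case M1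
    then obtain g where "s' = s" and "based_matrix (G, s, b)" "based_matrix (G', s, b')"
      and "g \<notin> G" "G' = insert g G" "\<forall>x\<in>G. \<forall>y\<in>G. b' x y = b x y" "\<forall>h\<in>G'. b' g h = 0"
      unfolding ext_M1_def T T' prod.case by blast
    then interpret elementary_extension G s b G' b' g g 0
      by unfold_locales auto
    show ?thesis using genus_eq unfolding T T' \<open>s' = s\<close> .
  next
    case M2
    then obtain g where "s' = s" and "based_matrix (G, s, b)" "based_matrix (G', s, b')"
      and "g \<notin> G" "G' = insert g G" "\<forall>x\<in>G. \<forall>y\<in>G. b' x y = b x y" "\<forall>h\<in>G. b' g h = b s h"
      unfolding ext_M2_def T T' prod.case by blast
    then interpret elementary_extension G s b G' b' g g 1
      by unfold_locales auto
    show ?thesis using genus_eq unfolding T T' \<open>s' = s\<close> .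
  next
    case M3
    then obtain g\<^sub>1 g\<^sub>2 where "s' = s" and "based_matrix (G, s, b)" "based_matrix (G', s, b')"
      and "g\<^sub>1 \<notin> G" "g\<^sub>2 \<notin> G" "g\<^sub>1 \<noteq> g\<^sub>2" "G' = insert g\<^sub>1 (insert g\<^sub>2 G)"
        "\<forall>x\<in>G. \<forall>y\<in>G. b' x y = b x y" "\<forall>h\<in>G. b' g\<^sub>1 h + b' g\<^sub>2 h = b s h"
      unfolding ext_M3_def T T' prod.case by blast
    then interpret elementary_extension G s b G' b' g\<^sub>1 g\<^sub>2 1
      by unfold_locales auto
    show ?thesis using genus_eq unfolding T T' \<open>s' = s\<close> .
  qed
qed

theorem lemma7p1:
  fixes T T' :: "('a, 'r::idom) based_matrix"
  assumes "homologous T T'"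
  shows "genus T = genus T'"
  using assms
proof (induction rule: homologous.induct)
  case (iso T T')
  then show ?case by (rule genus_eq_if_iso)
next
  case (ext T T')
  then show ?case by (rule genus_eq_if_elem_ext)
next
  case (ext_inv T' T)
  then show ?case using genus_eq_if_elem_ext by metis
next
  case (trans T1 T2 T3)
  then show ?case by simp
qed

end
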